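(* Let $\{\mathbf Z_i(n), i\in\mathbb N\}$ be a critical GWBP/$\infty$ with mean matrix $\mathbf M\in\mathcal M_1$ and $\mathbf F(\mathbf s)\neq\mathbf M\mathbf s$. Then $$\lim_{z\uparrow1}\sup_{i\in\mathbb N}\frac{(1-z)\mathbb EZ_i-\mathbb E(1-z^{Z_i})}{(1-z)\mathbb EZ_i}=0$$ and $$\lim_{z\uparrow1}\sup_{i\in\mathbb N}\frac{(1-z)\mathbb EZ_i-\sum_{j\in\mathbb N}\mathbb E(1-z^{Z_{ij}})}{(1-z)\mathbb EZ_i}=0.$$
   Context: A GWBP/$\infty$ has types $\mathbb N=\{1,2,\dots\}$. Each particle lives one unit of time; a type-$i$ particle produces, independently of everything else, a random vector $\mathbf Z_i=(Z_{ij})_{j\in\mathbb N}$ of children ($Z_{ij}$ of type $j$), with $Z_i:=\sum_jZ_{ij}<\infty$ a.s. $\mathbf Z_i(n)=(Z_{ij}(n))_j$ is the generation-$n$ population vector starting from one type-$i$ particle. $F_i(\mathbf s)=\mathbb E\prod_js_j^{Z_{ij}}$ for $\mathbf s\in[0,1]^{\mathbb N}$; "$\mathbf F(\mathbf s)\neq\mathbf M\mathbf s$" means it is not true that $F_i(\mathbf s)=\sum_jM_{ij}s_j$ for all $i,\mathbf s$. Mean matrix $\mathbf M=(M_{ij})$, $M_{ij}=\mathbb EZ_{ij}$, $M^{(n)}_{ij}=\mathbb EZ_{ij}(n)$, $M_i=\sum_jM_{ij}=\mathbb EZ_i$. Irreducible: for all $i,j$ some $M^{(n)}_{ij}>0$;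 aperiodic: gcd of such $n$ is 1; then $\lim_n(M^{(n)}_{ij})^{1/n}=1/R$ for a common $R$; critical: $R=1$. $\mathbf M\in\mathcal M_1$ means: (i) irreducible, aperiodic, $R=1$, 1-recurrent ($\sum_nM^{(n)}_{ij}=\infty$) and 1-positive ($\lim_nM^{(n)}_{ij}>0$ for all $i,j$); then there are positive eigenvectors $\mathbf v\mathbf M=\mathbf v$, $\mathbf M\mathbf u^T=\mathbf u^T$, unique up to positive multiples, normalized with $\sum_jv_ju_j=1$; (ii) $\sum_jv_j=1$ and $\sup_iu_i<\infty$; (iii) $\lim_{N\to\infty}\sup_iM_i^{-1}\sum_{j>N}M_{ij}=0$ and $\lim_{K\to\infty}\sup_iM_i^{-1}\mathbb E[Z_i;Z_i>K]=0$. *)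

theory Defs
  imports "HOL-Probability.Probability"
begin

text \<open>For each type i,
  P i is the offspring distribution: a distribution of the random vector
  Z_i = (Z_ij)_j, represented as a function nat => nat.\<close>

type_synonym offspring = "nat \<Rightarrow> (nat \<Rightarrow> nat) pmf"

text \<open>Z_i is finite a.s.: every offspring vector in the support has finite support.\<close>
definition gwbp_inf :: "offspring \<Rightarrow> bool" where
  "gwbp_inf P \<longleftrightarrow> (\<forall>i. \<forall>z\<in>set_pmf (P i). finite {j. z j \<noteq> 0})"

definition ztot :: "(nat \<Rightarrow> nat) \<Rightarrow> nat" where
  "ztot z = (\<Sum>j\<in>{j. z j \<noteq> 0}. z j)"

definition meanM :: "offspring \<Rightarrow> nat \<Rightarrow> nat \<Rightarrow> real" where
  "meanM P i j = measure_pmf.expectation (P i) (\<lambda>z. real (z j))"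

definition meanTot :: "offspring \<Rightarrow> nat \<Rightarrow> real" where
  "meanTot P i = measure_pmf.expectation (P i) (\<lambda>z. real (ztot z))"

primrec mpow :: "offspring \<Rightarrow> nat \<Rightarrow> nat \<Rightarrow> nat \<Rightarrow> ennreal" where
  "mpow P 0 i j = (if i = j then 1 else 0)"
| "mpow P (Suc n) i j = (\<Sum>k. mpow P n i k * ennreal (meanM P k j))"

definition pgf :: "offspring \<Rightarrow> nat \<Rightarrow> (nat \<Rightarrow> real) \<Rightarrow> real" where
  "pgf P i s = measure_pmf.expectation (P i) (\<lambda>z. \<Prod>j\<in>{j. z j \<noteq> 0}. s j ^ z j)"

definition in_M1 :: "offspring \<Rightarrow> bool" where
  "in_M1 P \<longleftrightarrow>
     \<comment> \<open>(i) irreducible\<close>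
     (\<forall>i j. \<exists>n. mpow P n i j > 0)
     \<comment> \<open>aperiodic\<close>
   \<and> (\<forall>i. Gcd {n. 0 < n \<and> mpow P n i i > 0} = 1)
     \<comment> \<open>R = 1: lim (M^(n)_ij)^(1/n) = 1\<close>
   \<and> (\<forall>i j. (\<lambda>n. root n (enn2real (mpow P n i j))) \<longlonglongrightarrow> 1)
     \<comment> \<open>1-recurrent\<close>
   \<and> (\<forall>i j. (\<Sum>n. mpow P n i j) = \<infinity>)
     \<comment> \<open>1-positive\<close>
   \<and> (\<forall>i j. \<exists>L. L > 0 \<and> (\<lambda>n. mpow P n i j) \<longlonglongrightarrow> L)
     \<comment> \<open>(i),(ii) positive eigenvectors, normalized\<close>
   \<and> (\<exists>v u :: nat \<Rightarrow> real.
        (\<forall>j. v j > 0) \<and> (\<forall>i. u i > 0)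
      \<and> (\<forall>j. ((\<lambda>i. v i * meanM P i j) sums v j))
      \<and> (\<forall>i. ((\<lambda>j. meanM P i j * u j) sums u i))
      \<and> ((\<lambda>j. v j * u j) sums 1)
      \<and> (v sums 1)
      \<and> bdd_above (range u))
     \<comment> \<open>(iii)\<close>
   \<and> ((\<lambda>N. SUP i. (\<Sum>j. meanM P i (j + Suc N)) / meanTot P i) \<longlonglongrightarrow> 0)
   \<and> ((\<lambda>K. SUP i. measure_pmf.expectation (P i)
                      (\<lambda>z. if ztot z > K then real (ztot z) else 0) / meanTot P i)
        \<longlonglongrightarrow> 0)"

end

theory Submission
  imports Defs
begin

(* For k in N and 0 <= x <= 1 the remainder (1 - x) k - (1 - x^k) = (1 - x) sum_{l<k} (1 - x^l)
   lies between 0 and (1 - x) ((1 - x^K) k + k [k > K]) for every K.  Taking expectations, the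
   relative remainder of type i is at most 1 - x^K + E[Z_i; Z_i > K] / E Z_i, uniformly in i.
   Condition (iii) of M_1 makes the second term small for K large, and then x -> 1 makes the
   first one small.  The coordinatewise remainder obeys the same bound, because
   sum_j Z_ij [Z_ij > K] <= Z_i [Z_i > K]. *)

(* E (tail_part K Z) is the truncated mean E[Z; Z > K] of condition (iii). *)
definition tail_part :: "nat \<Rightarrow> nat \<Rightarrow> real" where
  "tail_part K n = (if n > K then real n else 0)"

lemma tail_part_nonneg: "0 \<le> tail_part K n"
  by (simp add: tail_part_def)

lemma tail_part_le: "tail_part K n \<le> real n"
  by (simp add: tail_part_def)

lemma tail_part_add_le: "tail_part K m + tail_part K n \<le> tail_part K (m + n)"
  by (simp add: tail_part_def)

lemma sum_tail_part_le:
  assumes "finite A"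
  shows "(\<Sum>a\<in>A. tail_part K (f a)) \<le> tail_part K (\<Sum>a\<in>A. f a)"
  using assms
proof (induction A rule: finite_induct)
  case (insert a A)
  then show ?case
    using tail_part_add_le[of K "f a" "sum f A"] by simp
qed (simp add: tail_part_def)

lemma one_minus_power_le_mult:
  fixes x :: "'a :: linordered_field"
  assumes "0 \<le> x"
  shows "1 - x ^ k \<le> (1 - x) * of_nat k"
  using Bernoulli_inequality[of "x - 1" k] assms by (simp add: algebra_simps)

lemma mult_diff_one_minus_power_eq_sum:
  fixes x :: "'a :: comm_ring_1"
  shows "(1 - x) * of_nat k - (1 - x ^ k) = (1 - x) * (\<Sum>l<k. 1 - x ^ l)"
proof -
  have "1 - x ^ k = (1 - x) * (\<Sum>l<k. x ^ l)"
    using power_diff_1_eq[of x k] by (simp add: algebra_simps)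
  then show ?thesis
    by (simp add: sum_subtractf right_diff_distrib)
qed

lemma mult_diff_one_minus_power_le:
  fixes x :: real
  assumes "0 \<le> x" "x \<le> 1"
  shows "(1 - x) * k - (1 - x ^ k) \<le> (1 - x) * ((1 - x ^ K) * k + tail_part K k)"
proof -
  have "(\<Sum>l<k. 1 - x ^ l) \<le> (1 - x ^ K) * k + tail_part K k"
  proof (cases "k > K")
    case True
    have "(\<Sum>l<k. 1 - x ^ l) \<le> (\<Sum>l<k. 1)"
      by (rule sum_mono) (use assms in simp)
    moreover have "0 \<le> (1 - x ^ K) * k"
      using assms by (simp add: power_le_one)
    ultimately show ?thesis
      using True by (simp add: tail_part_def)
  next
    case False
    have "(\<Sum>l<k. 1 - x ^ l) \<le> (\<Sum>l<k. 1 - x ^ K)"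
      by (rule sum_mono) (use False assms in \<open>auto intro: power_decreasing\<close>)
    then show ?thesis
      using False by (simp add: tail_part_def mult.commute)
  qed
  then show ?thesis
    unfolding mult_diff_one_minus_power_eq_sum using assms by (simp add: mult_left_mono)
qed

lemma sum_mult_diff_one_minus_power_bounds:
  fixes x :: real and f :: "'a \<Rightarrow> nat"
  assumes "finite A" "0 \<le> x" "x \<le> 1"
  defines "n \<equiv> (\<Sum>a\<in>A. f a)"
  shows "0 \<le> (1 - x) * n - (\<Sum>a\<in>A. 1 - x ^ f a)"
    and "(1 - x) * n - (\<Sum>a\<in>A. 1 - x ^ f a) \<le> (1 - x) * ((1 - x ^ K) * n + tail_part K n)"
proof -
  have split: "(1 - x) * n - (\<Sum>a\<in>A. 1 - x ^ f a) = (\<Sum>a\<in>A. (1 - x) * f a - (1 - x ^ f a))"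
    by (simp add: n_def sum_subtractf sum_distrib_left)
  show "0 \<le> (1 - x) * n - (\<Sum>a\<in>A. 1 - x ^ f a)"
    unfolding split by (rule sum_nonneg) (simp add: one_minus_power_le_mult[OF assms(2)])
  have "(\<Sum>a\<in>A. (1 - x) * f a - (1 - x ^ f a))
      \<le> (\<Sum>a\<in>A. (1 - x) * ((1 - x ^ K) * f a + tail_part K (f a)))"
    by (rule sum_mono) (rule mult_diff_one_minus_power_le[OF assms(2,3)])
  also have "\<dots> = (1 - x) * ((1 - x ^ K) * n + (\<Sum>a\<in>A. tail_part K (f a)))"
    by (simp add: n_def sum_distrib_left sum.distrib distrib_left)
  also have "\<dots> \<le> (1 - x) * ((1 - x ^ K) * n + tail_part K n)"
    using sum_tail_part_le[OF assms(1)] assms(3) by (simp add: n_def mult_left_mono)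
  finally show "(1 - x) * n - (\<Sum>a\<in>A. 1 - x ^ f a) \<le> (1 - x) * ((1 - x ^ K) * n + tail_part K n)"
    unfolding split .
qed

lemma
  fixes f :: "nat \<Rightarrow> 'a \<Rightarrow> real"
  assumes f: "\<And>j. integrable M (f j)" and w: "integrable M w"
    and s: "s \<in> borel_measurable M" "AE x in M. (\<lambda>j. f j x) sums s x"
    and bound: "\<And>n. AE x in M. norm (\<Sum>j<n. f j x) \<le> w x"
  shows integrable_dominated_sums: "integrable M s"
    and sums_integral_dominated: "(\<lambda>j. integral\<^sup>L M (f j)) sums integral\<^sup>L M s"
proof -
  have lim: "AE x in M. (\<lambda>n. \<Sum>j<n. f j x) \<longlonglongrightarrow> s x"
    using s(2) by (simp add: sums_def)
  show "integrable M s"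
    by (rule integrable_dominated_convergence[OF s(1) _ w lim bound]) (use f in auto)
  have "(\<lambda>n. integral\<^sup>L M (\<lambda>x. \<Sum>j<n. f j x)) \<longlonglongrightarrow> integral\<^sup>L M s"
    by (rule integral_dominated_convergence[OF s(1) _ w lim bound]) (use f in auto)
  then show "(\<lambda>j. integral\<^sup>L M (f j)) sums integral\<^sup>L M s"
    by (simp add: sums_def f)
qed

lemma SUP_tendsto_0_at_left_1:
  fixes r :: "'i \<Rightarrow> real \<Rightarrow> real" and T :: "nat \<Rightarrow> 'i \<Rightarrow> real"
  assumes bounds: "\<And>i x K. 0 < x \<Longrightarrow> x < 1 \<Longrightarrow> 0 \<le> r i x \<and> r i x \<le> (1 - x ^ K) + T K i"
    and bdd: "\<And>K. bdd_above (range (T K))"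
    and T: "(\<lambda>K. SUP i. T K i) \<longlonglongrightarrow> 0"
  shows "((\<lambda>x. SUP i. r i x) \<longlongrightarrow> 0) (at_left 1)"
proof -
  have SUP_bounds: "0 \<le> (SUP i. r i x) \<and> (SUP i. r i x) \<le> (1 - x ^ K) + (SUP i. T K i)"
    if "0 < x" "x < 1" for x K
  proof -
    have le: "r i x \<le> (1 - x ^ K) + (SUP i. T K i)" for i
      using bounds[OF that, of i K] cSUP_upper[OF UNIV_I bdd[of K], of i] by linarith
    then have "bdd_above (range (\<lambda>i. r i x))"
      by (intro bdd_aboveI2)
    then have "r i x \<le> (SUP i. r i x)" for i
      by (rule cSUP_upper[OF UNIV_I])
    then have "0 \<le> (SUP i. r i x)"
      using bounds[OF that] by (meson order_trans)
    moreover have "(SUP i. r i x) \<le> (1 - x ^ K) + (SUP i. T K i)"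
      by (rule cSUP_least) (use le in auto)
    ultimately show ?thesis ..
  qed
  show ?thesis
  proof (rule tendstoI)
    fix e :: real
    assume "e > 0"
    have "\<forall>\<^sub>F K in sequentially. (SUP i. T K i) < e / 2"
      using T \<open>e > 0\<close> by (intro order_tendstoD(2)) auto
    then obtain K where K: "(SUP i. T K i) < e / 2"
      unfolding eventually_sequentially by blast
    have "((\<lambda>x::real. x ^ K) \<longlongrightarrow> 1) (at_left 1)"
      by (auto intro!: tendsto_eq_intros)
    then have "\<forall>\<^sub>F x in at_left 1. 1 - e / 2 < x ^ K"
      using \<open>e > 0\<close> by (intro order_tendstoD(1)) auto
    moreover have "\<forall>\<^sub>F x in at_left (1::real). x \<in> {0<..<1}"
      by (rule eventually_at_left_real) simp
    ultimately show "\<forall>\<^sub>F x in at_left 1. dist (SUP i. r i x) 0 < e"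
    proof eventually_elim
      case (elim x)
      then show ?case
        using SUP_bounds[of x K] K by (auto simp: dist_real_def)
    qed
  qed
qed

lemma expectation_tail_part_le:
  fixes p :: "'a pmf" and Z :: "'a \<Rightarrow> nat"
  assumes "integrable p (\<lambda>z. real (Z z))"
  shows "measure_pmf.expectation p (\<lambda>z. tail_part K (Z z)) \<le> measure_pmf.expectation p (\<lambda>z. real (Z z))"
  by (rule integral_mono[OF Bochner_Integration.integrable_bound[OF assms]])
     (auto simp: assms tail_part_le tail_part_nonneg)

lemma relative_expectation_le_tail:
  fixes p :: "'a pmf" and Z :: "'a \<Rightarrow> nat" and g :: "'a \<Rightarrow> real" and x :: real
  assumes Z: "integrable p (\<lambda>z. real (Z z))" and x: "0 < x" "x < 1"
    and g: "\<And>z. z \<in> set_pmf p \<Longrightarrow>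
              0 \<le> g z \<and> g z \<le> (1 - x) * ((1 - x ^ K) * Z z + tail_part K (Z z))"
  defines "m \<equiv> measure_pmf.expectation p (\<lambda>z. real (Z z))"
  shows "0 \<le> measure_pmf.expectation p g / ((1 - x) * m)"
    and "measure_pmf.expectation p g / ((1 - x) * m)
           \<le> (1 - x ^ K) + measure_pmf.expectation p (\<lambda>z. tail_part K (Z z)) / m"
proof -
  define T where "T = measure_pmf.expectation p (\<lambda>z. tail_part K (Z z))"
  have tail_int: "integrable p (\<lambda>z. tail_part K (Z z))"
    by (rule Bochner_Integration.integrable_bound[OF Z]) (auto simp: tail_part_def)
  have "integrable p (\<lambda>z. (1 - x) * ((1 - x ^ K) * Z z + tail_part K (Z z)))"
    using Z tail_int by simp
  then have g_int: "integrable p g"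
    by (rule Bochner_Integration.integrable_bound)
       (use g in \<open>fastforce simp: AE_measure_pmf_iff\<close>)+
  have "0 \<le> measure_pmf.expectation p g"
    by (rule integral_nonneg_AE) (use g in \<open>auto simp: AE_measure_pmf_iff\<close>)
  then show "0 \<le> measure_pmf.expectation p g / ((1 - x) * m)"
    using x by (simp add: m_def)
  have "measure_pmf.expectation p g
      \<le> measure_pmf.expectation p (\<lambda>z. (1 - x) * ((1 - x ^ K) * Z z + tail_part K (Z z)))"
    by (rule integral_mono_AE[OF g_int]) (use Z tail_int g in \<open>auto simp: AE_measure_pmf_iff\<close>)
  also have "\<dots> = (1 - x) * ((1 - x ^ K) * m + T)"
    using Z tail_int by (simp add: m_def T_def)
  finally have le: "measure_pmf.expectation p g \<le> (1 - x) * ((1 - x ^ K) * m + T)" .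
  show "measure_pmf.expectation p g / ((1 - x) * m) \<le> (1 - x ^ K) + T / m"
  proof (cases "m = 0")
    case True
    have "0 \<le> T" "x ^ K \<le> 1"
      using x by (auto simp: T_def tail_part_nonneg power_le_one)
    with True show ?thesis by simp
  next
    case False
    then have "m > 0"
      by (simp add: m_def order_less_le)
    then have "measure_pmf.expectation p g / ((1 - x) * m)
        \<le> (1 - x) * ((1 - x ^ K) * m + T) / ((1 - x) * m)"
      using le x by (intro divide_right_mono) auto
    also have "\<dots> = (1 - x ^ K) + T / m"
      using \<open>m > 0\<close> x by (simp add: field_simps)
    finally show ?thesis .
  qed
qed

lemma SUP_relative_expectation_tendsto_0:
  fixes p :: "'i \<Rightarrow> 'a pmf" and Z :: "'a \<Rightarrow> nat" and g :: "real \<Rightarrow> 'a \<Rightarrow> real"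
  assumes Z: "\<And>i. integrable (p i) (\<lambda>z. real (Z z))"
    and tails: "(\<lambda>K. SUP i. measure_pmf.expectation (p i) (\<lambda>z. tail_part K (Z z))
                              / measure_pmf.expectation (p i) (\<lambda>z. real (Z z))) \<longlonglongrightarrow> 0"
    and g: "\<And>i x z K. 0 < x \<Longrightarrow> x < 1 \<Longrightarrow> z \<in> set_pmf (p i) \<Longrightarrow>
              0 \<le> g x z \<and> g x z \<le> (1 - x) * ((1 - x ^ K) * Z z + tail_part K (Z z))"
    and N: "\<And>i x. 0 < x \<Longrightarrow> x < 1 \<Longrightarrow> N i x = measure_pmf.expectation (p i) (g x)"
  shows "((\<lambda>x. SUP i. N i x / ((1 - x) * measure_pmf.expectation (p i) (\<lambda>z. real (Z z))))
           \<longlongrightarrow> 0) (at_left 1)"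
proof (rule SUP_tendsto_0_at_left_1[OF _ _ tails])
  fix i K and x :: real
  assume x: "0 < x" "x < 1"
  from relative_expectation_le_tail[OF Z x g[OF x, of _ i K]]
  show "0 \<le> N i x / ((1 - x) * measure_pmf.expectation (p i) (\<lambda>z. real (Z z))) \<and>
        N i x / ((1 - x) * measure_pmf.expectation (p i) (\<lambda>z. real (Z z)))
          \<le> 1 - x ^ K + measure_pmf.expectation (p i) (\<lambda>z. tail_part K (Z z))
                         / measure_pmf.expectation (p i) (\<lambda>z. real (Z z))"
    by (simp add: N[OF x])
next
  fix K
  have "measure_pmf.expectation (p i) (\<lambda>z. tail_part K (Z z))
          / measure_pmf.expectation (p i) (\<lambda>z. real (Z z)) \<le> 1" for i
  proof -
    have "0 \<le> measure_pmf.expectation (p i) (\<lambda>z. tail_part K (Z z))"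
      by (simp add: integral_nonneg_AE tail_part_nonneg)
    with expectation_tail_part_le[OF Z, of i K] show ?thesis
      by (cases "measure_pmf.expectation (p i) (\<lambda>z. real (Z z)) = 0") (auto simp: divide_le_eq_1)
  qed
  then show "bdd_above (range (\<lambda>i. measure_pmf.expectation (p i) (\<lambda>z. tail_part K (Z z))
                         / measure_pmf.expectation (p i) (\<lambda>z. real (Z z))))"
    by (intro bdd_aboveI2)
qed

lemma sums_one_minus_power:
  fixes z :: "nat \<Rightarrow> nat" and x :: real
  assumes "finite {j. z j \<noteq> 0}"
  shows "(\<lambda>j. 1 - x ^ z j) sums (\<Sum>j | z j \<noteq> 0. 1 - x ^ z j)"
  by (rule sums_finite[OF assms]) simp

lemma sum_lessThan_one_minus_power_le_ztot:
  fixes z :: "nat \<Rightarrow> nat" and x :: real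
  assumes "finite {j. z j \<noteq> 0}" "0 \<le> x" "x \<le> 1"
  shows "\<bar>\<Sum>j<n. 1 - x ^ z j\<bar> \<le> ztot z"
proof -
  have "(\<lambda>j. real (z j)) sums real (ztot z)"
    using sums_finite[OF assms(1), of "\<lambda>j. real (z j)"] by (simp add: ztot_def)
  then have "(\<Sum>j<n. real (z j)) \<le> ztot z"
    by (metis sums_summable sums_unique of_nat_0_le_iff finite_lessThan sum_le_suminf)
  moreover have "1 - x ^ k \<le> real k" for k
    using one_minus_power_le_mult[OF assms(2), of k] mult_left_le_one_le[of "real k" "1 - x"] assms
    by simp
  then have "(\<Sum>j<n. 1 - x ^ z j) \<le> (\<Sum>j<n. real (z j))"
    by (rule sum_mono)
  moreover have "0 \<le> (\<Sum>j<n. 1 - x ^ z j)"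
    using assms(2,3) by (simp add: sum_nonneg power_le_one)
  ultimately show ?thesis
    by simp
qed

lemma
  fixes p :: "(nat \<Rightarrow> nat) pmf" and x :: real
  assumes fin: "\<And>z. z \<in> set_pmf p \<Longrightarrow> finite {j. z j \<noteq> 0}"
    and Z: "integrable p (\<lambda>z. real (ztot z))" and x: "0 \<le> x" "x \<le> 1"
  shows integrable_sum_one_minus_power: "integrable p (\<lambda>z. \<Sum>j | z j \<noteq> 0. 1 - x ^ z j)"
    and expectation_sums_one_minus_power: "(\<lambda>j. measure_pmf.expectation p (\<lambda>z. 1 - x ^ z j))
           sums measure_pmf.expectation p (\<lambda>z. \<Sum>j | z j \<noteq> 0. 1 - x ^ z j)"
proof -
  have f: "integrable p (\<lambda>z. 1 - x ^ z j)" for j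
    by (rule measure_pmf.integrable_const_bound[where B = 1]) (use x in \<open>auto simp: power_le_one\<close>)
  have s: "AE z in p. (\<lambda>j. 1 - x ^ z j) sums (\<Sum>j | z j \<noteq> 0. 1 - x ^ z j)"
    unfolding AE_measure_pmf_iff using fin sums_one_minus_power by blast
  have bound: "AE z in p. norm (\<Sum>j<n. 1 - x ^ z j) \<le> real (ztot z)" for n
    using fin x sum_lessThan_one_minus_power_le_ztot by (simp add: AE_measure_pmf_iff)
  show "integrable p (\<lambda>z. \<Sum>j | z j \<noteq> 0. 1 - x ^ z j)"
    by (rule integrable_dominated_sums[OF f Z _ s bound]) simp
  show "(\<lambda>j. measure_pmf.expectation p (\<lambda>z. 1 - x ^ z j))
          sums measure_pmf.expectation p (\<lambda>z. \<Sum>j | z j \<noteq> 0. 1 - x ^ z j)"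
    by (rule sums_integral_dominated[OF f Z _ s bound]) simp
qed

lemma uniform_relative_remainder_tendsto_0:
  fixes p :: "'i \<Rightarrow> 'a pmf" and Z :: "'a \<Rightarrow> nat"
  assumes Z: "\<And>i. integrable (p i) (\<lambda>z. real (Z z))"
    and tails: "(\<lambda>K. SUP i. measure_pmf.expectation (p i) (\<lambda>z. tail_part K (Z z))
                              / measure_pmf.expectation (p i) (\<lambda>z. real (Z z))) \<longlonglongrightarrow> 0"
  shows "((\<lambda>x::real. SUP i. ((1 - x) * measure_pmf.expectation (p i) (\<lambda>z. real (Z z))
              - measure_pmf.expectation (p i) (\<lambda>z. 1 - x ^ Z z))
              / ((1 - x) * measure_pmf.expectation (p i) (\<lambda>z. real (Z z)))) \<longlongrightarrow> 0) (at_left 1)"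
proof (rule SUP_relative_expectation_tendsto_0[OF Z tails,
      where g = "\<lambda>x z. (1 - x) * Z z - (1 - x ^ Z z)"])
  show "0 \<le> (1 - x) * Z z - (1 - x ^ Z z) \<and>
        (1 - x) * Z z - (1 - x ^ Z z) \<le> (1 - x) * ((1 - x ^ K) * Z z + tail_part K (Z z))"
    if "0 < x" "x < 1" for x :: real and z K
    using that one_minus_power_le_mult[of x "Z z"] mult_diff_one_minus_power_le[of x "Z z" K]
    by simp
  show "(1 - x) * measure_pmf.expectation (p i) (\<lambda>z. real (Z z))
          - measure_pmf.expectation (p i) (\<lambda>z. 1 - x ^ Z z)
        = measure_pmf.expectation (p i) (\<lambda>z. (1 - x) * Z z - (1 - x ^ Z z))"
    if "0 < x" "x < 1" for x :: real and i
  proof -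
    have "integrable (p i) (\<lambda>z. 1 - x ^ Z z)"
      by (rule measure_pmf.integrable_const_bound[where B = 1])
         (use that in \<open>auto simp: power_le_one\<close>)
    with Z show ?thesis
      by simp
  qed
qed

lemma uniform_relative_coordinate_remainder_tendsto_0:
  fixes p :: "'i \<Rightarrow> (nat \<Rightarrow> nat) pmf"
  assumes fin: "\<forall>i. \<forall>z\<in>set_pmf (p i). finite {j. z j \<noteq> 0}"
    and Z: "\<And>i. integrable (p i) (\<lambda>z. real (ztot z))"
    and tails: "(\<lambda>K. SUP i. measure_pmf.expectation (p i) (\<lambda>z. tail_part K (ztot z))
                              / measure_pmf.expectation (p i) (\<lambda>z. real (ztot z))) \<longlonglongrightarrow> 0"
  shows "((\<lambda>x::real. SUP i. ((1 - x) * measure_pmf.expectation (p i) (\<lambda>z. real (ztot z))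
              - (\<Sum>j. measure_pmf.expectation (p i) (\<lambda>z. 1 - x ^ z j)))
              / ((1 - x) * measure_pmf.expectation (p i) (\<lambda>z. real (ztot z)))) \<longlongrightarrow> 0) (at_left 1)"
proof (rule SUP_relative_expectation_tendsto_0[OF Z tails,
      where g = "\<lambda>x z. (1 - x) * ztot z - (\<Sum>j | z j \<noteq> 0. 1 - x ^ z j)"])
  show "0 \<le> (1 - x) * ztot z - (\<Sum>j | z j \<noteq> 0. 1 - x ^ z j) \<and>
        (1 - x) * ztot z - (\<Sum>j | z j \<noteq> 0. 1 - x ^ z j)
          \<le> (1 - x) * ((1 - x ^ K) * ztot z + tail_part K (ztot z))"
    if "0 < x" "x < 1" "z \<in> set_pmf (p i)" for x :: real and z K i
    using sum_mult_diff_one_minus_power_bounds[OF fin[rule_format, OF that(3)], where x = x] that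
    by (simp add: ztot_def)
  show "(1 - x) * measure_pmf.expectation (p i) (\<lambda>z. real (ztot z))
          - (\<Sum>j. measure_pmf.expectation (p i) (\<lambda>z. 1 - x ^ z j))
        = measure_pmf.expectation (p i) (\<lambda>z. (1 - x) * ztot z - (\<Sum>j | z j \<noteq> 0. 1 - x ^ z j))"
    if "0 < x" "x < 1" for x :: real and i
    using that Z integrable_sum_one_minus_power[OF fin[rule_format] Z[of i], where x = x]
      sums_unique[OF expectation_sums_one_minus_power[OF fin[rule_format] Z[of i], where x = x]]
    by simp
qed

theorem theorem3:
  fixes P :: offspring
  assumes "gwbp_inf P"
    and "\<forall>i. integrable (measure_pmf (P i)) (\<lambda>z. real (ztot z))"
    and "in_M1 P"
    and "\<not> (\<forall>i s. (\<forall>j. s j \<in> {0..1}) \<longrightarrow> pgf P i s = (\<Sum>j. meanM P i j * s j))"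
  shows "((\<lambda>x::real. SUP i. ((1 - x) * meanTot P i
              - measure_pmf.expectation (P i) (\<lambda>z. 1 - x ^ ztot z))
              / ((1 - x) * meanTot P i)) \<longlongrightarrow> 0) (at_left 1) \<and>
         ((\<lambda>x::real. SUP i. ((1 - x) * meanTot P i
              - (\<Sum>j. measure_pmf.expectation (P i) (\<lambda>z. 1 - x ^ z j)))
              / ((1 - x) * meanTot P i)) \<longlongrightarrow> 0) (at_left 1)"
proof -
  have Z: "\<And>i. integrable (P i) (\<lambda>z. real (ztot z))"
    using assms(2) by blast
  have tails: "(\<lambda>K. SUP i. measure_pmf.expectation (P i) (\<lambda>z. tail_part K (ztot z))
                             / measure_pmf.expectation (P i) (\<lambda>z. real (ztot z))) \<longlonglongrightarrow> 0"
    using assms(3) by (simp add: in_M1_def tail_part_def meanTot_def)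
  \<comment> \<open>Beyond finiteness and integrability of the Z_i only condition (iii) of M_1 is used.\<close>
  show ?thesis
    unfolding meanTot_def
    using uniform_relative_remainder_tendsto_0[OF Z tails]
      uniform_relative_coordinate_remainder_tendsto_0[OF assms(1)[unfolded gwbp_inf_def] Z tails]
    by blast
qed

end
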